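(* Let $\lambda$ be a partition, $\nu\in\mathcal{U}(\lambda)$, $(x,y)=\nu/\lambda$, and let $u,v\ge1$ be integers. (1) If $c=(x+u,y)$, then \[ P^{q,t}_\lambda(\nu\mid c)=t^{\ell_\lambda(c)}\frac{1-q}{1-q^{a_\nu(c)+1}t^{\ell_\nu(c)}}\prod_{c'\in{\rm arm}_\lambda(c)\setminus\{\nu/\lambda\}}\frac{1-q^{a_\lambda(c')+1}t^{\ell_\lambda(c')}}{1-q^{a_\nu(c')+1}t^{\ell_\nu(c')}}. \] (2) If $c=(x,y+v)$, then \[ P^{q,t}_\lambda(\nu\mid c)=\frac{1-t}{1-q^{a_\nu(c)}t^{\ell_\nu(c)+1}}\prod_{c''\in{\rm leg}_\lambda(c)\setminus\{\nu/\lambda\}}\frac{1-q^{a_\lambda(c'')}t^{\ell_\lambda(c'')+1}}{1-q^{a_\nu(c'')}t^{\ell_\nu(c'')+1}}. \]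
   Context: Partitions are Young diagrams in French convention: cells $(x,y)\in\mathbb{Z}_{>0}^2$ with $x\le\lambda_y$; $\lambda'$ is the conjugate, with $\lambda_j=0$ for $j>\lambda'_1$, $\lambda'_i=0$ for $i>\lambda_1$. $\mathcal{U}(\lambda)$ is the set of partitions obtained by adding one cell to $\lambda$. For a partition $\kappa$, $\overline{\kappa}=\mathbb{Z}_{>0}^2\setminus\kappa$, and for $c=(x,y)\in\overline{\kappa}$: ${\rm arm}_\kappa(c)=\{(i,y):\kappa_y<i<x\}$, ${\rm leg}_\kappa(c)=\{(x,j):\kappa'_x<j<y\}$, exterior arm-length $a_\kappa(c)=|{\rm arm}_\kappa(c)|$ and exterior leg-length $\ell_\kappa(c)=|{\rm leg}_\kappa(c)|$ (all arm/leg lengths in the statement are these exterior ones; the relevant cells lie outside both $\lambda$ and $\nu$). $c\in\overline{\lambda}$ is an outer corner iff $a_\lambda(c)=\ell_\lambda(c)=0$. For $c'\in{\rm arm}_\lambda(c)\cup{\rm leg}_\lambda(c)$, $P(c\rightarrow c')=q^{a_\lambda(c)-i}\frac{t^{\ell_\lambda(c)}(1-q)}{1-q^{a_\lambda(c)}t^{\ell_\lambda(c)}}$ if $c'=(x-i,y)$, and $P(c\rightarrow c')=t^{j-1}\frac{1-t}{1-q^{a_\lambda(c)}t^{\ell_\lambda(c)}}$ if $c'=(x,y-j)$. The exterior $(q,t)$-hook walk from $c$ terminates if $c$ is an outer corner, otherwise moves to $c'$ with probability $P(c\rightarrow c')$ and repeats; $P^{q,t}_\lambda(\nu\mid c)$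 is the probability (a rational function in $q,t$) that it terminates at the cell $\nu/\lambda$. *)

theory Defs
  imports Main
begin

text \<open>Partitions as weakly decreasing lists of positive parts, French convention:
  the row length of row y (y \<ge> 1) is lambda_y.\<close>

definition is_partition :: "nat list \<Rightarrow> bool" where
  "is_partition lam \<longleftrightarrow> sorted_wrt (\<ge>) lam \<and> 0 \<notin> set lam"

definition row :: "nat list \<Rightarrow> nat \<Rightarrow> nat" where
  "row lam y = (if 1 \<le> y \<and> y \<le> length lam then lam ! (y - 1) else 0)"

definition conj :: "nat list \<Rightarrow> nat \<Rightarrow> nat" where
  "conj lam x = length (filter (\<lambda>r. x \<le> r) lam)"

definition cells :: "nat list \<Rightarrow> (nat \<times> nat) set" where
  "cells lam = {(x, y). 1 \<le> x \<and> 1 \<le> y \<and> x \<le> row lam y}"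

definition in_U :: "nat list \<Rightarrow> nat list \<Rightarrow> bool" where
  "in_U lam nu \<longleftrightarrow> is_partition nu \<and> cells lam \<subseteq> cells nu \<and> card (cells nu - cells lam) = 1"

definition arm :: "nat list \<Rightarrow> nat \<times> nat \<Rightarrow> (nat \<times> nat) set" where
  "arm kap c = {(i, snd c) | i. row kap (snd c) < i \<and> i < fst c}"

definition leg :: "nat list \<Rightarrow> nat \<times> nat \<Rightarrow> (nat \<times> nat) set" where
  "leg kap c = {(fst c, j) | j. conj kap (fst c) < j \<and> j < snd c}"

definition armlen :: "nat list \<Rightarrow> nat \<times> nat \<Rightarrow> nat" where
  "armlen kap c = card (arm kap c)"

definition leglen :: "nat list \<Rightarrow> nat \<times> nat \<Rightarrow> nat" where
  "leglen kap c = card (leg kap c)"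

text \<open>Transition probability P(c \<rightarrow> c') of the exterior (q,t)-hook walk
  (only meaningful for c' in the arm or leg of c).\<close>
definition trans_prob :: "nat list \<Rightarrow> 'a::field \<Rightarrow> 'a \<Rightarrow> nat \<times> nat \<Rightarrow> nat \<times> nat \<Rightarrow> 'a" where
  "trans_prob lam q t c c' =
     (let a = armlen lam c; l = leglen lam c in
      if snd c' = snd c
      then q ^ (a - (fst c - fst c')) * t ^ l * (1 - q) / (1 - q ^ a * t ^ l)
      else t ^ (snd c - snd c' - 1) * (1 - t) / (1 - q ^ a * t ^ l))"

text \<open>hook_walk lam q t c d = probability that the exterior (q,t)-hook walk
  started at c terminates at the cell d.\<close>
function hook_walk :: "nat list \<Rightarrow> 'a::field \<Rightarrow> 'a \<Rightarrow> nat \<times> nat \<Rightarrow> nat \<times> nat \<Rightarrow> 'a" where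
  "hook_walk lam q t c d =
     (if armlen lam c = 0 \<and> leglen lam c = 0 then (if d = c then 1 else 0)
      else (\<Sum>c'\<in>arm lam c \<union> leg lam c. trans_prob lam q t c c' * hook_walk lam q t c' d))"
  by pat_completeness auto
termination
  by (relation "measure (\<lambda>(lam, q, t, c, d). fst c + snd c)")
     (auto simp: arm_def leg_def)

end

(* Started at (x + k, y), a leg move leaves row y downwards, after which the walk can no
   longer reach (x, y); so only arm moves count, and the arm of (x + k, y) in lam is
   (x + j, y), j < k. Writing P k for the probability of ending at (x, y), this gives
   P 0 = 1 and P k = c k * S k with S k = (sum of q^j * P j over j < k), hence
   S (k + 1) = (1 + q^k * c k) * S k, and S telescopes into a product over the arm.
   Each factor 1 + q^k * c k is the quotient of the hook factors of (x + k, y) in lam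
   and in nu, since adding (x, y) shortens its arm by one and keeps its leg. The column
   case is the same with S k replaced by the sum of t^(k - 1 - j) * P j, which satisfies
   S (k + 1) = (t + c k) * S k. *)

theory Submission
  imports Defs
begin

declare hook_walk.simps[simp del]

lemma arm_eq: "arm kap c = (\<lambda>i. (i, snd c)) ` {row kap (snd c)<..<fst c}"
  by (auto simp: arm_def)

lemma leg_eq: "leg kap c = (\<lambda>j. (fst c, j)) ` {conj kap (fst c)<..<snd c}"
  by (auto simp: leg_def)

lemma armlen_eq: "armlen kap c = fst c - Suc (row kap (snd c))"
  by (simp add: armlen_def arm_eq card_image inj_on_def)

lemma leglen_eq: "leglen kap c = snd c - Suc (conj kap (fst c))"
  by (simp add: leglen_def leg_eq card_image inj_on_def)

lemma finite_arm: "finite (arm kap c)"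
  by (simp add: arm_eq)

lemma finite_leg: "finite (leg kap c)"
  by (simp add: leg_eq)

lemma row_antimono:
  assumes "is_partition kap" "1 \<le> a" "a \<le> b"
  shows "row kap b \<le> row kap a"
proof (cases "a < b \<and> b \<le> length kap")
  case True
  then have "kap ! (b - 1) \<le> kap ! (a - 1)"
    using assms by (auto simp: is_partition_def sorted_wrt_iff_nth_less)
  then show ?thesis using True assms(2) by (simp add: row_def)
qed (use assms(3) in \<open>auto simp: row_def\<close>)

lemma card_row_cells:
  assumes "1 \<le> y"
  shows "card {x. (x, y) \<in> cells kap} = row kap y"
proof -
  have "{x. (x, y) \<in> cells kap} = {1..row kap y}"
    using assms by (auto simp: cells_def)
  then show ?thesis by simp
qed

lemma card_column_cells:
  assumes "1 \<le> x"
  shows "card {y. (x, y) \<in> cells kap} = conj kap x"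
proof -
  have "{y. (x, y) \<in> cells kap} = Suc ` {i. i < length kap \<and> x \<le> kap ! i}"
  proof (rule set_eqI, rule iffI)
    fix y assume "y \<in> {y. (x, y) \<in> cells kap}"
    then have "1 \<le> y" "y \<le> length kap" "x \<le> kap ! (y - 1)"
      using assms by (auto simp: cells_def row_def split: if_splits)
    then show "y \<in> Suc ` {i. i < length kap \<and> x \<le> kap ! i}"
      by (auto intro!: image_eqI[where x = "y - 1"])
  qed (use assms in \<open>auto simp: cells_def row_def\<close>)
  then show ?thesis
    by (simp add: conj_def length_filter_conv_card card_image)
qed

lemma hook_walk_outer_corner:
  "armlen lam c = 0 \<Longrightarrow> leglen lam c = 0 \<Longrightarrow> hook_walk lam q t c c = 1"
  by (simp add: hook_walk.simps)

lemma hook_walk_eq_0_if_beyond: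
  "fst c < fst d \<or> snd c < snd d \<Longrightarrow> hook_walk lam q t c d = 0"
proof (induction lam q t c d rule: hook_walk.induct)
  case (1 lam q t c d)
  have "hook_walk lam q t c' d = 0"
    if "\<not> (armlen lam c = 0 \<and> leglen lam c = 0)" "c' \<in> arm lam c \<union> leg lam c" for c'
    using "1.IH"[OF that] "1.prems" that(2) by (auto simp: arm_def leg_def)
  then show ?case
    using "1.prems" by (subst hook_walk.simps) auto
qed

lemma hook_walk_along_row:
  assumes "snd d = snd c" and "\<not> (armlen lam c = 0 \<and> leglen lam c = 0)"
  shows "hook_walk lam q t c d = (\<Sum>c'\<in>arm lam c. trans_prob lam q t c c' * hook_walk lam q t c' d)"
proof -
  have "hook_walk lam q t c' d = 0" if "c' \<in> leg lam c" for c'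
    using that assms(1) by (intro hook_walk_eq_0_if_beyond) (auto simp: leg_def)
  then show ?thesis
    using assms(2) by (subst hook_walk.simps)
      (auto intro!: sum.mono_neutral_right simp: finite_arm finite_leg)
qed

lemma hook_walk_along_column:
  assumes "fst d = fst c" and "\<not> (armlen lam c = 0 \<and> leglen lam c = 0)"
  shows "hook_walk lam q t c d = (\<Sum>c'\<in>leg lam c. trans_prob lam q t c c' * hook_walk lam q t c' d)"
proof -
  have "hook_walk lam q t c' d = 0" if "c' \<in> arm lam c" for c'
    using that assms(1) by (intro hook_walk_eq_0_if_beyond) (auto simp: arm_def)
  then show ?thesis
    using assms(2) by (subst hook_walk.simps)
      (auto intro!: sum.mono_neutral_right simp: finite_arm finite_leg)
qed

lemma geometric_sum_recurrence_eq_prod: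
  fixes f c :: "nat \<Rightarrow> 'a::field"
  assumes "f 0 = 1" and rec: "\<And>k. 1 \<le> k \<Longrightarrow> f k = c k * (\<Sum>j<k. r ^ j * f j)"
    and "1 \<le> k"
  shows "(\<Sum>j<k. r ^ j * f j) = (\<Prod>i\<in>{1..<k}. 1 + r ^ i * c i)"
  using \<open>1 \<le> k\<close>
proof (induction k rule: dec_induct)
  case (step k)
  let ?S = "\<Sum>j<k. r ^ j * f j"
  have "(\<Sum>j<Suc k. r ^ j * f j) = ?S + r ^ k * (c k * ?S)"
    using rec[OF step.hyps(1)] by simp
  also have "\<dots> = ?S * (1 + r ^ k * c k)"
    by (simp add: algebra_simps)
  finally show ?case
    using step by (simp add: prod.atLeastLessThan_Suc)
qed (simp add: assms(1))

lemma convolution_recurrence_eq_prod: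
  fixes f c :: "nat \<Rightarrow> 'a::field"
  assumes "f 0 = 1" and rec: "\<And>k. 1 \<le> k \<Longrightarrow> f k = c k * (\<Sum>j<k. r ^ (k - 1 - j) * f j)"
    and "1 \<le> k"
  shows "(\<Sum>j<k. r ^ (k - 1 - j) * f j) = (\<Prod>i\<in>{1..<k}. r + c i)"
  using \<open>1 \<le> k\<close>
proof (induction k rule: dec_induct)
  case (step k)
  let ?S = "\<Sum>j<k. r ^ (k - 1 - j) * f j"
  have "(\<Sum>j<k. r ^ (Suc k - 1 - j) * f j) = r * ?S"
    unfolding sum_distrib_left
  proof (rule sum.cong)
    fix j assume "j \<in> {..<k}"
    then have "Suc k - 1 - j = Suc (k - 1 - j)" by auto
    then show "r ^ (Suc k - 1 - j) * f j = r * (r ^ (k - 1 - j) * f j)" by simp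
  qed simp
  then have "(\<Sum>j<Suc k. r ^ (Suc k - 1 - j) * f j) = r * ?S + c k * ?S"
    using rec[OF step.hyps(1)] by simp
  also have "\<dots> = ?S * (r + c k)"
    by (simp add: algebra_simps)
  finally show ?case
    using step by (simp add: prod.atLeastLessThan_Suc)
qed (simp add: assms(1))

locale added_cell =
  fixes lam nu :: "nat list" and x y :: nat
  assumes partition: "is_partition lam"
    and in_U: "in_U lam nu"
    and added: "cells nu - cells lam = {(x, y)}"
begin

lemma cells_nu: "cells nu = insert (x, y) (cells lam)"
  and not_in_cells_lam: "(x, y) \<notin> cells lam"
  using added in_U by (auto simp: in_U_def)

lemma x_pos: "1 \<le> x" and y_pos: "1 \<le> y" and x_le_row_nu: "x \<le> row nu y"
  using cells_nu by (auto simp: cells_def)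

lemma row_cells_lam: "{x'. (x', y) \<in> cells lam} = {1..<x}"
proof -
  have "row lam y < x"
    using not_in_cells_lam x_pos y_pos by (simp add: cells_def)
  moreover have "(x', y) \<in> cells lam" if "1 \<le> x'" "x' < x" for x'
    using that x_le_row_nu y_pos cells_nu by (auto simp: cells_def)
  ultimately show ?thesis by (auto simp: cells_def)
qed

lemma column_cells_lam: "{y'. (x, y') \<in> cells lam} = {1..<y}"
proof -
  have "row lam y' < x" if "y \<le> y'" for y'
    using row_antimono[OF partition y_pos that] not_in_cells_lam x_pos y_pos
    by (simp add: cells_def)
  moreover have "(x, y') \<in> cells lam" if "1 \<le> y'" "y' < y" for y'
  proof -
    have "row nu y \<le> row nu y'"
      using in_U that by (intro row_antimono) (auto simp: in_U_def)
    then show ?thesis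
      using that x_pos x_le_row_nu cells_nu by (auto simp: cells_def)
  qed
  ultimately show ?thesis
    by (auto simp: cells_def not_le[symmetric])
qed

lemma row_lam: "row lam y = x - 1"
  using card_row_cells[OF y_pos, of lam] by (simp add: row_cells_lam)

lemma conj_lam: "conj lam x = y - 1"
  using card_column_cells[OF x_pos, of lam] by (simp add: column_cells_lam)

lemma row_nu:
  assumes "1 \<le> y'"
  shows "row nu y' = (if y' = y then x else row lam y')"
proof (cases "y' = y")
  case True
  then have "{x'. (x', y') \<in> cells nu} = insert x {1..<x}"
    using cells_nu row_cells_lam by auto
  then show ?thesis
    using card_row_cells[OF assms, of nu] True x_pos by simp
next
  case False
  then have "{x'. (x', y') \<in> cells nu} = {x'. (x', y') \<in> cells lam}"
    using cells_nu by auto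
  then show ?thesis
    using card_row_cells[OF assms] False by metis
qed

lemma conj_nu:
  assumes "1 \<le> x'"
  shows "conj nu x' = (if x' = x then y else conj lam x')"
proof (cases "x' = x")
  case True
  then have "{y'. (x', y') \<in> cells nu} = insert y {1..<y}"
    using cells_nu column_cells_lam by auto
  then show ?thesis
    using card_column_cells[OF assms, of nu] True y_pos by simp
next
  case False
  then have "{y'. (x', y') \<in> cells nu} = {y'. (x', y') \<in> cells lam}"
    using cells_nu by auto
  then show ?thesis
    using card_column_cells[OF assms] False by metis
qed

lemma arm_lam_right: "arm lam (x + k, y) = (\<lambda>i. (x + i, y)) ` {..<k}"
proof -
  have "{x - 1<..<x + k} = (+) x ` {0..<k}"
    using x_pos by auto
  then show ?thesis
    by (simp add: arm_eq row_lam image_image atLeast0LessThan)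
qed

lemma leg_lam_above: "leg lam (x, y + k) = (\<lambda>j. (x, y + j)) ` {..<k}"
proof -
  have "{y - 1<..<y + k} = (+) y ` {0..<k}"
    using y_pos by auto
  then show ?thesis
    by (simp add: leg_eq conj_lam image_image atLeast0LessThan)
qed

lemma armlen_lam_right: "armlen lam (x + k, y) = k"
  and armlen_nu_right: "armlen nu (x + k, y) = k - 1"
  using x_pos y_pos by (simp_all add: armlen_eq row_lam row_nu)

lemma leglen_lam_above: "leglen lam (x, y + k) = k"
  and leglen_nu_above: "leglen nu (x, y + k) = k - 1"
  using x_pos y_pos by (simp_all add: leglen_eq conj_lam conj_nu)

lemma leglen_nu_right: "1 \<le> k \<Longrightarrow> leglen nu (x + k, y) = leglen lam (x + k, y)"
  using x_pos by (simp add: leglen_eq conj_nu)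

lemma armlen_nu_above: "1 \<le> k \<Longrightarrow> armlen nu (x, y + k) = armlen lam (x, y + k)"
  using y_pos by (simp add: armlen_eq row_nu)

lemma hook_walk_added_cell: "hook_walk lam q t (x, y) (x, y) = 1"
  using armlen_lam_right[of 0] leglen_lam_above[of 0] by (simp add: hook_walk_outer_corner)

lemma hook_walk_from_right_rec:
  fixes q t :: "'a::field"
  assumes "1 \<le> k"
  defines "l \<equiv> leglen lam (x + k, y)"
  shows "hook_walk lam q t (x + k, y) (x, y)
    = t ^ l * (1 - q) / (1 - q ^ k * t ^ l) * (\<Sum>j<k. q ^ j * hook_walk lam q t (x + j, y) (x, y))"
proof -
  have "hook_walk lam q t (x + k, y) (x, y)
      = (\<Sum>j<k. trans_prob lam q t (x + k, y) (x + j, y) * hook_walk lam q t (x + j, y) (x, y))"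
    using assms(1) armlen_lam_right[of k]
    by (simp add: hook_walk_along_row arm_lam_right sum.reindex inj_on_def)
  also have "\<dots> = (\<Sum>j<k. t ^ l * (1 - q) / (1 - q ^ k * t ^ l)
                          * (q ^ j * hook_walk lam q t (x + j, y) (x, y)))"
    by (intro sum.cong) (auto simp: trans_prob_def armlen_lam_right l_def Let_def)
  finally show ?thesis
    by (simp add: sum_distrib_left)
qed

lemma hook_walk_from_above_rec:
  fixes q t :: "'a::field"
  assumes "1 \<le> k"
  defines "a \<equiv> armlen lam (x, y + k)"
  shows "hook_walk lam q t (x, y + k) (x, y)
    = (1 - t) / (1 - q ^ a * t ^ k) * (\<Sum>j<k. t ^ (k - 1 - j) * hook_walk lam q t (x, y + j) (x, y))"
proof -
  have "hook_walk lam q t (x, y + k) (x, y)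
      = (\<Sum>j<k. trans_prob lam q t (x, y + k) (x, y + j) * hook_walk lam q t (x, y + j) (x, y))"
    using assms(1) leglen_lam_above[of k]
    by (simp add: hook_walk_along_column leg_lam_above sum.reindex inj_on_def)
  also have "\<dots> = (\<Sum>j<k. (1 - t) / (1 - q ^ a * t ^ k)
                          * (t ^ (k - 1 - j) * hook_walk lam q t (x, y + j) (x, y)))"
    by (intro sum.cong) (auto simp: trans_prob_def leglen_lam_above a_def Let_def)
  finally show ?thesis
    by (simp add: sum_distrib_left)
qed

theorem hook_walk_from_right:
  fixes q t :: "'a::field"
  assumes "1 \<le> u" and nondegenerate: "\<And>a l. 1 \<le> a \<Longrightarrow> q ^ a * t ^ l \<noteq> 1"
  shows "hook_walk lam q t (x + u, y) (x, y) =
           t ^ leglen lam (x + u, y) * (1 - q)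
             / (1 - q ^ (armlen nu (x + u, y) + 1) * t ^ leglen nu (x + u, y))
           * (\<Prod>c'\<in>arm lam (x + u, y) - {(x, y)}.
                (1 - q ^ (armlen lam c' + 1) * t ^ leglen lam c')
                / (1 - q ^ (armlen nu c' + 1) * t ^ leglen nu c'))"
proof -
  define P where "P k = hook_walk lam q t (x + k, y) (x, y)" for k
  define L where "L k = leglen lam (x + k, y)" for k
  define ratio where "ratio i = (1 - q ^ (i + 1) * t ^ L i) / (1 - q ^ i * t ^ L i)" for i
  have "hook_walk lam q t (x + u, y) (x, y)
      = t ^ L u * (1 - q) / (1 - q ^ u * t ^ L u) * (\<Sum>j<u. q ^ j * P j)"
    unfolding P_def L_def by (rule hook_walk_from_right_rec[OF assms(1)])
  also have "(\<Sum>j<u. q ^ j * P j) = (\<Prod>i\<in>{1..<u}. 1 + q ^ i * (t ^ L i * (1 - q) / (1 - q ^ i * t ^ L i)))"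
    using assms(1) hook_walk_added_cell hook_walk_from_right_rec
    by (intro geometric_sum_recurrence_eq_prod) (simp_all add: P_def L_def)
  also have "\<dots> = (\<Prod>i\<in>{1..<u}. ratio i)"
  proof (intro prod.cong)
    fix i assume "i \<in> {1..<u}"
    then have "1 - q ^ i * t ^ L i \<noteq> 0"
      using nondegenerate[of i "L i"] by auto
    then show "1 + q ^ i * (t ^ L i * (1 - q) / (1 - q ^ i * t ^ L i)) = ratio i"
      by (simp add: ratio_def field_simps)
  qed simp
  also have "\<dots> = (\<Prod>c'\<in>arm lam (x + u, y) - {(x, y)}.
                (1 - q ^ (armlen lam c' + 1) * t ^ leglen lam c')
                / (1 - q ^ (armlen nu c' + 1) * t ^ leglen nu c'))"
  proof (rule sym, rule prod.reindex_cong)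
    show "inj_on (\<lambda>i. (x + i, y)) {1..<u}"
      by (simp add: inj_on_def)
    show "arm lam (x + u, y) - {(x, y)} = (\<lambda>i. (x + i, y)) ` {1..<u}"
      by (auto simp: arm_lam_right)
    fix i assume "i \<in> {1..<u}"
    then have nu_lengths: "armlen nu (x + i, y) + 1 = i" "leglen nu (x + i, y) = L i"
      by (simp_all add: armlen_nu_right leglen_nu_right L_def)
    show "(1 - q ^ (armlen lam (x + i, y) + 1) * t ^ leglen lam (x + i, y))
        / (1 - q ^ (armlen nu (x + i, y) + 1) * t ^ leglen nu (x + i, y)) = ratio i"
      unfolding nu_lengths armlen_lam_right ratio_def L_def by (rule refl)
  qed
  finally show ?thesis
    using assms(1) by (simp add: L_def armlen_nu_right leglen_nu_right)
qed

theorem hook_walk_from_above: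
  fixes q t :: "'a::field"
  assumes "1 \<le> v" and nondegenerate: "\<And>a l. 1 \<le> l \<Longrightarrow> q ^ a * t ^ l \<noteq> 1"
  shows "hook_walk lam q t (x, y + v) (x, y) =
           (1 - t) / (1 - q ^ armlen nu (x, y + v) * t ^ (leglen nu (x, y + v) + 1))
           * (\<Prod>c''\<in>leg lam (x, y + v) - {(x, y)}.
                (1 - q ^ armlen lam c'' * t ^ (leglen lam c'' + 1))
                / (1 - q ^ armlen nu c'' * t ^ (leglen nu c'' + 1)))"
proof -
  define Q where "Q k = hook_walk lam q t (x, y + k) (x, y)" for k
  define A where "A k = armlen lam (x, y + k)" for k
  define ratio where "ratio i = (1 - q ^ A i * t ^ (i + 1)) / (1 - q ^ A i * t ^ i)" for i
  have "hook_walk lam q t (x, y + v) (x, y)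
      = (1 - t) / (1 - q ^ A v * t ^ v) * (\<Sum>j<v. t ^ (v - 1 - j) * Q j)"
    unfolding Q_def A_def by (rule hook_walk_from_above_rec[OF assms(1)])
  also have "(\<Sum>j<v. t ^ (v - 1 - j) * Q j) = (\<Prod>i\<in>{1..<v}. t + (1 - t) / (1 - q ^ A i * t ^ i))"
    using assms(1) hook_walk_added_cell hook_walk_from_above_rec
    by (intro convolution_recurrence_eq_prod) (simp_all add: Q_def A_def)
  also have "\<dots> = (\<Prod>i\<in>{1..<v}. ratio i)"
  proof (intro prod.cong)
    fix i assume "i \<in> {1..<v}"
    then have "1 - q ^ A i * t ^ i \<noteq> 0"
      using nondegenerate[of i "A i"] by auto
    then show "t + (1 - t) / (1 - q ^ A i * t ^ i) = ratio i"
      by (simp add: ratio_def field_simps)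
  qed simp
  also have "\<dots> = (\<Prod>c''\<in>leg lam (x, y + v) - {(x, y)}.
                (1 - q ^ armlen lam c'' * t ^ (leglen lam c'' + 1))
                / (1 - q ^ armlen nu c'' * t ^ (leglen nu c'' + 1)))"
  proof (rule sym, rule prod.reindex_cong)
    show "inj_on (\<lambda>j. (x, y + j)) {1..<v}"
      by (simp add: inj_on_def)
    show "leg lam (x, y + v) - {(x, y)} = (\<lambda>j. (x, y + j)) ` {1..<v}"
      by (auto simp: leg_lam_above)
    fix i assume "i \<in> {1..<v}"
    then have nu_lengths: "leglen nu (x, y + i) + 1 = i" "armlen nu (x, y + i) = A i"
      by (simp_all add: leglen_nu_above armlen_nu_above A_def)
    show "(1 - q ^ armlen lam (x, y + i) * t ^ (leglen lam (x, y + i) + 1))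
        / (1 - q ^ armlen nu (x, y + i) * t ^ (leglen nu (x, y + i) + 1)) = ratio i"
      unfolding nu_lengths leglen_lam_above ratio_def A_def by (rule refl)
  qed
  finally show ?thesis
    using assms(1) by (simp add: A_def leglen_nu_above armlen_nu_above)
qed

end

theorem lemma6p7:
  fixes lam nu :: "nat list" and x y u v :: nat and q t :: "'a::field"
  assumes "is_partition lam" and "in_U lam nu"
    and "cells nu - cells lam = {(x, y)}"
    and "u \<ge> 1" and "v \<ge> 1"
    and generic: "\<And>a l. (a, l) \<noteq> (0, 0) \<Longrightarrow> q ^ a * t ^ l \<noteq> 1"
  shows "(hook_walk lam q t (x + u, y) (x, y) =
           t ^ leglen lam (x + u, y) * (1 - q)
             / (1 - q ^ (armlen nu (x + u, y) + 1) * t ^ leglen nu (x + u, y))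
           * (\<Prod>c'\<in>arm lam (x + u, y) - {(x, y)}.
                (1 - q ^ (armlen lam c' + 1) * t ^ leglen lam c')
                / (1 - q ^ (armlen nu c' + 1) * t ^ leglen nu c')))
         \<and> (hook_walk lam q t (x, y + v) (x, y) =
           (1 - t) / (1 - q ^ armlen nu (x, y + v) * t ^ (leglen nu (x, y + v) + 1))
           * (\<Prod>c''\<in>leg lam (x, y + v) - {(x, y)}.
                (1 - q ^ armlen lam c'' * t ^ (leglen lam c'' + 1))
                / (1 - q ^ armlen nu c'' * t ^ (leglen nu c'' + 1))))"
proof -
  interpret added_cell lam nu x y
    using assms(1-3) by unfold_locales
  have "q ^ a * t ^ l \<noteq> 1" if "1 \<le> a \<or> 1 \<le> l" for a l
    using generic that by auto
  then show ?thesis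
    using hook_walk_from_right[OF assms(4)] hook_walk_from_above[OF assms(5)] by blast
qed

end
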